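(* Let $\alpha\in(0,1)$ and $\varphi\in C^1([0,\infty))$ with $\varphi(0)=0$. Then for all $t>0$, $$\frac{d}{dt}\int_0^t\!\!\int_0^t\tfrac12N_0^\alpha(t-r,t-s)\,\varphi(s)\varphi(r)\,dr\,ds=\varphi(t)\,{}^{C}\!D^\alpha\varphi(t)-\int_0^t\!\!\int_0^tN_1^\alpha(t-r,t-s)\,\dot\varphi(s)\dot\varphi(r)\,dr\,ds .$$
   Context: For $\alpha\in(0,1)$ and $r,s\ge0$ with $r+s>0$: $N_0^\alpha(r,s)=\dfrac{\alpha}{\Gamma(1-\alpha)(r+s)^{1+\alpha}}$ and $N_1^\alpha(r,s)=\dfrac{1}{\Gamma(1-\alpha)(r+s)^{\alpha}}$. The Caputo derivative of order $\alpha$ of $g\in C^1([0,\infty))$ is ${}^{C}\!D^\alpha g(t)=\dfrac{1}{\Gamma(1-\alpha)}\displaystyle\int_0^t(t-\tau)^{-\alpha}\dot g(\tau)\,d\tau$. *)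

theory Defs
  imports "HOL-Analysis.Analysis"
begin

definition N0 :: "real \<Rightarrow> real \<Rightarrow> real \<Rightarrow> real" where
  "N0 \<alpha> r s = \<alpha> / (Gamma (1 - \<alpha>) * (r + s) powr (1 + \<alpha>))"

definition N1 :: "real \<Rightarrow> real \<Rightarrow> real \<Rightarrow> real" where
  "N1 \<alpha> r s = 1 / (Gamma (1 - \<alpha>) * (r + s) powr \<alpha>)"

definition caputo :: "real \<Rightarrow> (real \<Rightarrow> real) \<Rightarrow> real \<Rightarrow> real" where
  "caputo \<alpha> g t = 1 / Gamma (1 - \<alpha>) *
     (LINT \<tau>:{0..t}|lborel. (t - \<tau>) powr (-\<alpha>) * deriv g \<tau>)"

end

theory Submission
  imports Defs
begin

text \<open>After substituting \<open>r \<mapsto> u - r\<close> and \<open>s \<mapsto> u - s\<close>, the energy at a time \<open>u \<le> T\<close> is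
  \<open>1/2 \<integral>\<integral> N\<^sub>0(a,b) \<phi>(u - a) \<phi>(u - b)\<close> over the fixed square \<open>[0,T]\<^sup>2\<close>, where \<open>\<phi>\<close> is extended
  by \<open>0\<close> to the negative reals (this is where \<open>\<phi>(0) = 0\<close> enters): the time \<open>u\<close> has moved from
  the domain of integration into the integrand. The kernel is integrable on the square because
  \<open>(a + b) powr -\<gamma> \<le> (a b) powr (-\<gamma>/2)\<close> with \<open>\<gamma> = 1 + \<alpha> < 2\<close>, and the integrand is Lipschitz
  in \<open>u\<close>, so by dominated convergence the derivative may be taken under the integral sign.
  By the symmetry of \<open>N\<^sub>0\<close> it equals \<open>\<integral>\<integral> N\<^sub>0(a,b) \<phi>'(t - a) \<phi>(t - b)\<close>. Since \<open>\<partial>\<^sub>b N\<^sub>1 = -N\<^sub>0\<close>,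
  integrating by parts in \<open>b\<close> turns the inner integral into
  \<open>N\<^sub>1(a,0) \<phi>(t) - \<integral> N\<^sub>1(a,b) \<phi>'(t - b) db\<close>; the first term yields \<open>\<phi>(t)\<close> times the Caputo
  derivative, the second the \<open>N\<^sub>1\<close> double integral.\<close>

lemma integrable_indicator_Icc_powr_neg:
  fixes \<beta> T :: real
  assumes "\<beta> < 1" "0 \<le> T"
  shows "integrable lborel (\<lambda>x. indicator {0..T} x * x powr (-\<beta>))"
proof -
  have "(\<lambda>x. x powr (-\<beta>)) integrable_on {0..T}"
    using assms by (intro integrable_on_powr_from_0) auto
  then have "(\<lambda>x. x powr (-\<beta>)) absolutely_integrable_on {0..T}"
    by (intro nonnegative_absolutely_integrable_1) auto
  then have "integrable lebesgue (\<lambda>x. indicator {0..T} x * x powr (-\<beta>))"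
    by (simp add: set_integrable_def)
  then show ?thesis
    by (subst (asm) integrable_completion) auto
qed

lemma integrable_product_fst_snd:
  fixes f g :: "real \<Rightarrow> real"
  assumes "integrable lborel f" "integrable lborel g"
  shows "integrable (lborel \<Otimes>\<^sub>M lborel) (\<lambda>x. f (fst x) * g (snd x))"
proof (rule integrableI_bounded)
  have [measurable]: "f \<in> borel_measurable lborel" "g \<in> borel_measurable lborel"
    using assms by (auto dest: borel_measurable_integrable)
  show "(\<lambda>x. f (fst x) * g (snd x)) \<in> borel_measurable (lborel \<Otimes>\<^sub>M lborel)"
    by measurable
  have "(\<integral>\<^sup>+x. ennreal (norm (f (fst x) * g (snd x))) \<partial>(lborel \<Otimes>\<^sub>M lborel))
      = (\<integral>\<^sup>+a. \<integral>\<^sup>+b. ennreal (norm (f a)) * ennreal (norm (g b)) \<partial>lborel \<partial>lborel)"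
    by (subst lborel.nn_integral_fst[symmetric]) (auto simp: abs_mult ennreal_mult)
  also have "\<dots> = (\<integral>\<^sup>+a. ennreal (norm (f a)) \<partial>lborel) * (\<integral>\<^sup>+b. ennreal (norm (g b)) \<partial>lborel)"
    by (simp add: nn_integral_cmult nn_integral_multc)
  also have "\<dots> < \<infinity>"
    using assms by (auto simp: integrable_iff_bounded ennreal_mult_less_top)
  finally show "(\<integral>\<^sup>+x. ennreal (norm (f (fst x) * g (snd x))) \<partial>(lborel \<Otimes>\<^sub>M lborel)) < \<infinity>" .
qed

lemma AE_lborel_pair_neq:
  "AE x in lborel \<Otimes>\<^sub>M lborel. fst x \<noteq> (c::real) \<and> snd x \<noteq> (d::real)"
proof (rule lborel_pair.AE_pair_measure)
  show "{x \<in> space (lborel \<Otimes>\<^sub>M lborel). fst x \<noteq> c \<and> snd x \<noteq> d} \<in> sets (lborel \<Otimes>\<^sub>M lborel)"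
    by measurable
  show "AE a in lborel. AE b in lborel. fst (a, b) \<noteq> c \<and> snd (a, b) \<noteq> d"
    using AE_lborel_singleton[of c]
  proof eventually_elim
    case (elim a)
    show ?case using AE_lborel_singleton[of d] by eventually_elim (use elim in auto)
  qed
qed

lemma powr_add_neg_le_powr_half_mult:
  fixes a b \<gamma> :: real
  assumes "0 \<le> \<gamma>" "0 < a" "0 < b"
  shows "(a + b) powr (-\<gamma>) \<le> a powr (-\<gamma>/2) * b powr (-\<gamma>/2)"
proof -
  have "sqrt (a * b) \<le> a + b"
    using assms by (intro real_le_lsqrt) (auto simp: power2_eq_square algebra_simps)
  then have "((a * b) powr (1/2)) powr \<gamma> \<le> (a + b) powr \<gamma>"
    using assms by (intro powr_mono2) (auto simp: powr_half_sqrt)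
  then have "a powr (\<gamma>/2) * b powr (\<gamma>/2) \<le> (a + b) powr \<gamma>"
    using assms by (simp add: powr_powr powr_mult)
  then have "inverse ((a + b) powr \<gamma>) \<le> inverse (a powr (\<gamma>/2) * b powr (\<gamma>/2))"
    using assms by (intro le_imp_inverse_le) auto
  then show ?thesis
    using assms by (simp add: powr_minus)
qed

lemma integrable_indicator_square_powr_add:
  fixes \<gamma> T :: real
  assumes "0 \<le> \<gamma>" "\<gamma> < 2" "0 \<le> T"
  shows "integrable (lborel \<Otimes>\<^sub>M lborel)
     (\<lambda>x. indicator ({0..T} \<times> {0..T}) x * (fst x + snd x) powr (-\<gamma>))"
proof -
  let ?g = "\<lambda>x::real. indicator {0..T} x * x powr (-(\<gamma>/2))"
  have "integrable lborel ?g"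
    using assms by (intro integrable_indicator_Icc_powr_neg) auto
  then show ?thesis
  proof (intro Bochner_Integration.integrable_bound[OF integrable_product_fst_snd])
    show "AE x in lborel \<Otimes>\<^sub>M lborel. norm (indicator ({0..T} \<times> {0..T}) x * (fst x + snd x) powr (-\<gamma>))
        \<le> norm (?g (fst x) * ?g (snd x))"
      using AE_lborel_pair_neq[of 0 0]
    proof eventually_elim
      case (elim x)
      show ?case
      proof (cases "x \<in> {0..T} \<times> {0..T}")
        case True
        then have "0 < fst x" "0 < snd x" using elim by (auto simp: mem_Times_iff)
        then show ?thesis
          using True powr_add_neg_le_powr_half_mult[of \<gamma> "fst x" "snd x"] assms
          by (auto simp: mem_Times_iff indicator_def abs_mult)
      qed (auto simp: indicator_def)
    qed
  qed measurable
qed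

lemma integrable_mult_bounded:
  fixes f g :: "'a \<Rightarrow> real"
  assumes "integrable M f" "g \<in> borel_measurable M"
    and "\<And>x. x \<in> space M \<Longrightarrow> f x \<noteq> 0 \<Longrightarrow> \<bar>g x\<bar> \<le> C"
  shows "integrable M (\<lambda>x. f x * g x)"
proof (rule Bochner_Integration.integrable_bound[where f="\<lambda>x. \<bar>C\<bar> * \<bar>f x\<bar>"])
  show "integrable M (\<lambda>x. \<bar>C\<bar> * \<bar>f x\<bar>)" using assms by auto
  show "(\<lambda>x. f x * g x) \<in> borel_measurable M"
    using assms borel_measurable_integrable by measurable
  show "AE x in M. norm (f x * g x) \<le> norm (\<bar>C\<bar> * \<bar>f x\<bar>)"
  proof (rule AE_I2)
    fix x assume "x \<in> space M"
    then have "\<bar>f x\<bar> * \<bar>g x\<bar> \<le> \<bar>f x\<bar> * \<bar>C\<bar>"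
      using assms(3)[of x] by (cases "f x = 0") (auto intro: mult_left_mono)
    then show "norm (f x * g x) \<le> norm (\<bar>C\<bar> * \<bar>f x\<bar>)"
      by (simp add: abs_mult mult.commute)
  qed
qed

lemma set_integral_Icc_reflect:
  fixes g :: "real \<Rightarrow> real"
  shows "(LINT r:{0..u}|lborel. g r) = (LINT b:{0..u}|lborel. g (u - b))"
proof -
  have "(LINT r:{0..u}|lborel. g r)
      = \<bar>-1\<bar> *\<^sub>R (\<integral>x. indicator {0..u} (u + -1 * x) *\<^sub>R g (u + -1 * x) \<partial>lborel)"
    unfolding set_lebesgue_integral_def by (rule lborel_integral_real_affine) simp
  also have "\<dots> = (LINT b:{0..u}|lborel. g (u - b))"
    unfolding set_lebesgue_integral_def
    by (simp, rule Bochner_Integration.integral_cong) (auto simp: indicator_def)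
  finally show ?thesis .
qed

lemma set_integral_lborel_pair:
  fixes f :: "real \<times> real \<Rightarrow> real"
  assumes "integrable (lborel \<Otimes>\<^sub>M lborel) (\<lambda>x. indicator (A \<times> B) x * f x)"
  shows "(LINT a:A|lborel. LINT b:B|lborel. f (a, b))
       = (\<integral>x. indicator (A \<times> B) x * f x \<partial>(lborel \<Otimes>\<^sub>M lborel))"
proof -
  have "(LINT a:A|lborel. LINT b:B|lborel. f (a, b))
      = (\<integral>a. (\<integral>b. indicator (A \<times> B) (a, b) * f (a, b) \<partial>lborel) \<partial>lborel)"
    unfolding set_lebesgue_integral_def
    by (intro Bochner_Integration.integral_cong refl)
       (simp add: indicator_times mult.assoc)
  also have "\<dots> = (\<integral>x. indicator (A \<times> B) x * f x \<partial>(lborel \<Otimes>\<^sub>M lborel))"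
    using lborel_pair.integral_fst'[OF assms] by simp
  finally show ?thesis .
qed

lemma has_real_derivative_integral_Lipschitz:
  fixes g :: "real \<Rightarrow> 'a \<Rightarrow> real"
  assumes [measurable]: "\<And>u. g u \<in> borel_measurable M" "g' \<in> borel_measurable M"
    and integrable: "\<And>u. integrable M (g u)" "integrable M w"
    and Lipschitz: "\<And>u x. x \<in> space M \<Longrightarrow> \<bar>g u x - g t x\<bar> \<le> w x * \<bar>u - t\<bar>"
    and deriv: "AE x in M. ((\<lambda>u. g u x) has_real_derivative g' x) (at t)"
  shows "((\<lambda>u. \<integral>x. g u x \<partial>M) has_real_derivative (\<integral>x. g' x \<partial>M)) (at t)"
  unfolding has_field_derivative_iff tendsto_at_iff_sequentially
proof (intro allI impI)
  fix X :: "nat \<Rightarrow> real" assume X: "\<forall>i. X i \<in> UNIV - {t}" "X \<longlonglongrightarrow> t"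
  define s where "s i x = (g (X i) x - g t x) / (X i - t)" for i x
  have "(\<lambda>i. \<integral>x. s i x \<partial>M) \<longlonglongrightarrow> (\<integral>x. g' x \<partial>M)"
  proof (rule integral_dominated_convergence[where w=w])
    show "s i \<in> borel_measurable M" for i
      unfolding s_def by measurable
    show "AE x in M. (\<lambda>i. s i x) \<longlonglongrightarrow> g' x"
      using deriv
    proof eventually_elim
      case (elim x)
      then have "((\<lambda>u. (g u x - g t x) / (u - t)) \<longlongrightarrow> g' x) (at t)"
        by (simp add: has_field_derivative_iff)
      then show ?case
        using X unfolding s_def tendsto_at_iff_sequentially comp_def by blast
    qed
    show "AE x in M. norm (s i x) \<le> w x" for i
    proof (rule AE_I2)
      fix x assume "x \<in> space M"
      then show "norm (s i x) \<le> w x"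
        using Lipschitz[of x "X i"] X(1) by (simp add: s_def abs_divide divide_le_eq)
    qed
  qed (measurable, rule integrable(2))
  moreover have "(\<integral>x. s i x \<partial>M) = ((\<integral>x. g (X i) x \<partial>M) - (\<integral>x. g t x \<partial>M)) / (X i - t)" for i
    unfolding s_def integral_divide_zero
    using integrable(1) by (simp add: Bochner_Integration.integral_diff)
  ultimately show "((\<lambda>u. ((\<integral>x. g u x \<partial>M) - (\<integral>x. g t x \<partial>M)) / (u - t)) \<circ> X) \<longlonglongrightarrow> (\<integral>x. g' x \<partial>M)"
    by (simp add: comp_def)
qed

lemma N0_eq_powr: "N0 \<alpha> a b = \<alpha> / Gamma (1 - \<alpha>) * (a + b) powr (-(1 + \<alpha>))"
  unfolding N0_def by (simp only: powr_minus_divide) simp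

lemma N1_eq_powr: "N1 \<alpha> a b = 1 / Gamma (1 - \<alpha>) * (a + b) powr (-\<alpha>)"
  unfolding N1_def by (simp only: powr_minus_divide) simp

lemma N0_commute: "N0 \<alpha> a b = N0 \<alpha> b a"
  by (simp add: N0_def add.commute)

lemma N1_commute: "N1 \<alpha> a b = N1 \<alpha> b a"
  by (simp add: N1_def add.commute)

lemma N0_nonneg: "0 \<le> \<alpha> \<Longrightarrow> \<alpha> < 1 \<Longrightarrow> 0 \<le> N0 \<alpha> a b"
  by (simp add: N0_eq_powr)

lemma borel_measurable_N0 [measurable]:
  "(\<lambda>x. N0 \<alpha> (fst x) (snd x)) \<in> borel_measurable (lborel \<Otimes>\<^sub>M lborel)"
  unfolding N0_def by measurable

lemma integrable_N0_square:
  assumes "0 \<le> \<alpha>" "\<alpha> < 1" "0 \<le> T"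
  shows "integrable (lborel \<Otimes>\<^sub>M lborel)
     (\<lambda>x. indicator ({0..T} \<times> {0..T}) x * N0 \<alpha> (fst x) (snd x))"
  using integrable_mult_right[OF integrable_indicator_square_powr_add[of "1 + \<alpha>" T],
      of "\<alpha> / Gamma (1 - \<alpha>)"] assms
  by (simp add: N0_eq_powr mult_ac)

lemma integrable_N1_square:
  assumes "0 \<le> \<alpha>" "\<alpha> < 2" "0 \<le> T"
  shows "integrable (lborel \<Otimes>\<^sub>M lborel)
     (\<lambda>x. indicator ({0..T} \<times> {0..T}) x * N1 \<alpha> (fst x) (snd x))"
  using integrable_mult_right[OF integrable_indicator_square_powr_add[of \<alpha> T],
      of "1 / Gamma (1 - \<alpha>)"] assms
  by (simp add: N1_eq_powr mult_ac)

lemma continuous_on_N0: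
  assumes "\<And>b. b \<in> S \<Longrightarrow> 0 < a + b"
  shows "continuous_on S (N0 \<alpha> a)"
  unfolding N0_eq_powr[abs_def]
  by (intro continuous_on_mult_left continuous_intros) (auto dest!: assms)

lemma continuous_on_N1:
  assumes "\<And>b. b \<in> S \<Longrightarrow> 0 < a + b"
  shows "continuous_on S (N1 \<alpha> a)"
  unfolding N1_eq_powr[abs_def]
  by (intro continuous_on_mult_left continuous_intros) (auto dest!: assms)

lemma N1_has_real_derivative:
  assumes "0 < a + b"
  shows "((\<lambda>b. N1 \<alpha> a b) has_real_derivative - N0 \<alpha> a b) (at b)"
proof -
  have "((\<lambda>b. (a + b) powr (-\<alpha>)) has_real_derivative -\<alpha> * (a + b) powr (-\<alpha> - 1)) (at b)"
    using assms by (auto intro!: derivative_eq_intros)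
  moreover have "(a + b) powr (-\<alpha> - 1) = (a + b) powr (-(1 + \<alpha>))"
    by (rule arg_cong[where f="\<lambda>x. (a + b) powr x"]) simp
  ultimately have "((\<lambda>b. (a + b) powr (-\<alpha>)) has_real_derivative -\<alpha> * (a + b) powr (-(1 + \<alpha>))) (at b)"
    by simp
  from DERIV_cmult[OF this, of "1 / Gamma (1 - \<alpha>)"] show ?thesis
    by (simp only: N1_eq_powr N0_eq_powr) (simp add: algebra_simps)
qed

lemma set_integral_N0_by_parts:
  fixes \<psi> \<psi>' :: "real \<Rightarrow> real"
  assumes "0 < a" "0 \<le> t"
    and cont: "continuous_on {0..t} \<psi>" "continuous_on {0..t} \<psi>'"
    and deriv: "\<And>x. 0 < x \<Longrightarrow> x < t \<Longrightarrow> (\<psi> has_real_derivative \<psi>' x) (at x)"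
    and "\<psi> 0 = 0"
  shows "(LINT b:{0..t}|lborel. N0 \<alpha> a b * \<psi> (t - b))
       = N1 \<alpha> a 0 * \<psi> t - (LINT b:{0..t}|lborel. N1 \<alpha> a b * \<psi>' (t - b))"
proof -
  let ?f0 = "\<lambda>b. N0 \<alpha> a b * \<psi> (t - b)" and ?f1 = "\<lambda>b. N1 \<alpha> a b * \<psi>' (t - b)"
  have reflect: "continuous_on {0..t} (\<lambda>b. f (t - b))" if "continuous_on {0..t} f" for f :: "real \<Rightarrow> real"
    by (rule continuous_on_compose2[OF that]) (auto intro!: continuous_intros)
  have cont0: "continuous_on {0..t} ?f0" and cont1: "continuous_on {0..t} ?f1"
    using assms(1) cont
    by (auto intro!: continuous_intros continuous_on_N0 continuous_on_N1 reflect)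
  have "((\<lambda>b. ?f0 b + ?f1 b) has_integral
      (- (N1 \<alpha> a t * \<psi> (t - t))) - (- (N1 \<alpha> a 0 * \<psi> (t - 0)))) {0..t}"
  proof (rule fundamental_theorem_of_calculus_interior[OF \<open>0 \<le> t\<close>])
    show "continuous_on {0..t} (\<lambda>b. - (N1 \<alpha> a b * \<psi> (t - b)))"
      using assms(1) cont by (auto intro!: continuous_intros continuous_on_N1 reflect)
    fix b assume b: "b \<in> {0<..<t}"
    have "((\<lambda>b. \<psi> (t - b)) has_real_derivative \<psi>' (t - b) * (-1)) (at b)"
      using b by (intro DERIV_chain2[OF deriv]) (auto intro!: derivative_eq_intros)
    from DERIV_mult'[OF N1_has_real_derivative this, THEN DERIV_minus]
    show "((\<lambda>b. - (N1 \<alpha> a b * \<psi> (t - b))) has_vector_derivative ?f0 b + ?f1 b) (at b)"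
      using assms(1) b
      by (simp add: has_real_derivative_iff_has_vector_derivative[symmetric] algebra_simps)
  qed
  then have "((\<lambda>b. ?f0 b + ?f1 b - ?f1 b) has_integral N1 \<alpha> a 0 * \<psi> t - integral {0..t} ?f1) {0..t}"
    using \<open>\<psi> 0 = 0\<close>
    by (intro has_integral_diff integrable_integral integrable_continuous_interval cont1) simp
  then have "integral {0..t} ?f0 = N1 \<alpha> a 0 * \<psi> t - integral {0..t} ?f1"
    by (simp add: integral_unique)
  moreover have "(LINT b:{0..t}|lborel. f b) = integral {0..t} f" if "continuous_on {0..t} f" for f :: "real \<Rightarrow> real"
    using borel_integrable_compact[OF compact_Icc that]
    by (intro set_borel_integral_eq_integral(2)) (simp add: set_integrable_def)
  ultimately show ?thesis
    using cont0 cont1 by simp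
qed

locale caputo_energy =
  fixes \<alpha> T L :: real and \<phi> \<phi>' :: "real \<Rightarrow> real"
  assumes alpha_pos: "0 < \<alpha>" and alpha_less_1: "\<alpha> < 1"
    and phi_deriv: "\<And>x. 0 \<le> x \<Longrightarrow> (\<phi> has_real_derivative \<phi>' x) (at x within {0..})"
    and phi'_cont: "continuous_on {0..} \<phi>'"
    and phi_0: "\<phi> 0 = 0" and T_pos: "0 < T"
    and phi'_bound: "\<And>x. x \<in> {0..T} \<Longrightarrow> \<bar>\<phi>' x\<bar> \<le> L"
begin

text \<open>Outside \<open>[0,T]\<close>, \<open>\<phi>\<close> and \<open>\<phi>'\<close> are extended by constants; the extensions are continuous,
  hence Borel, and \<open>phi_ext\<close> vanishes on the negative reals because \<open>\<phi>(0) = 0\<close>.\<close>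
definition clamp :: "real \<Rightarrow> real" where "clamp x = max 0 (min T x)"
definition phi_ext :: "real \<Rightarrow> real" where "phi_ext x = \<phi> (clamp x)"
definition phi'_ext :: "real \<Rightarrow> real" where "phi'_ext x = \<phi>' (clamp x)"
definition phi_ext_deriv :: "real \<Rightarrow> real" where
  "phi_ext_deriv x = (if 0 < x then phi'_ext x else 0)"

lemma L_nonneg: "0 \<le> L"
  using phi'_bound[of 0] T_pos by auto

lemma clamp_range: "clamp x \<in> {0..T}"
  unfolding clamp_def using T_pos by auto

lemma continuous_on_phi: "continuous_on {0..} \<phi>"
  unfolding continuous_on_eq_continuous_within
  using phi_deriv by (meson DERIV_continuous atLeast_iff)

lemma continuous_phi_ext: "continuous_on UNIV phi_ext"
  unfolding phi_ext_def clamp_def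
  by (rule continuous_on_compose2[OF continuous_on_phi]) (auto intro!: continuous_intros)

lemma continuous_phi'_ext: "continuous_on UNIV phi'_ext"
  unfolding phi'_ext_def clamp_def
  by (rule continuous_on_compose2[OF phi'_cont]) (auto intro!: continuous_intros)

lemma borel_measurable_phi_ext [measurable]: "phi_ext \<in> borel_measurable borel"
  by (rule borel_measurable_continuous_onI[OF continuous_phi_ext])

lemma borel_measurable_phi'_ext [measurable]: "phi'_ext \<in> borel_measurable borel"
  by (rule borel_measurable_continuous_onI[OF continuous_phi'_ext])

lemma borel_measurable_phi_ext_deriv [measurable]: "phi_ext_deriv \<in> borel_measurable borel"
  unfolding phi_ext_deriv_def by measurable

lemma phi_ext_eq: "x \<in> {0..T} \<Longrightarrow> phi_ext x = \<phi> x"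
  by (simp add: phi_ext_def clamp_def)

lemma phi_ext_nonpos: "x \<le> 0 \<Longrightarrow> phi_ext x = 0"
  using phi_0 by (simp add: phi_ext_def clamp_def)

lemma phi'_ext_eq: "x \<in> {0..T} \<Longrightarrow> phi'_ext x = \<phi>' x"
  by (simp add: phi'_ext_def clamp_def)

lemma phi_Lipschitz:
  assumes "x \<in> {0..T}" "y \<in> {0..T}"
  shows "\<bar>\<phi> x - \<phi> y\<bar> \<le> L * \<bar>x - y\<bar>"
proof -
  have "(\<phi> has_real_derivative \<phi>' z) (at z within {0..T})" if "z \<in> {0..T}" for z
    using that by (intro DERIV_subset[OF phi_deriv]) auto
  then show ?thesis
    using field_differentiable_bound[of "{0..T}" \<phi> \<phi>' L x y] phi'_bound assms by fastforce
qed

lemma phi_ext_Lipschitz: "\<bar>phi_ext x - phi_ext y\<bar> \<le> L * \<bar>x - y\<bar>"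
proof -
  have "\<bar>phi_ext x - phi_ext y\<bar> \<le> L * \<bar>clamp x - clamp y\<bar>"
    unfolding phi_ext_def by (rule phi_Lipschitz[OF clamp_range clamp_range])
  also have "\<dots> \<le> L * \<bar>x - y\<bar>"
    using L_nonneg by (intro mult_left_mono) (auto simp: clamp_def)
  finally show ?thesis .
qed

lemma phi_ext_bound: "\<bar>phi_ext x\<bar> \<le> L * T"
proof -
  have "\<bar>phi_ext x\<bar> = \<bar>\<phi> (clamp x) - \<phi> 0\<bar>"
    using phi_0 by (simp add: phi_ext_def)
  also have "\<dots> \<le> L * \<bar>clamp x - 0\<bar>"
    using T_pos by (intro phi_Lipschitz clamp_range) auto
  also have "\<dots> \<le> L * T"
    using clamp_range[of x] L_nonneg by (intro mult_left_mono) auto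
  finally show ?thesis .
qed

lemma phi'_ext_bound: "\<bar>phi'_ext x\<bar> \<le> L"
  unfolding phi'_ext_def by (rule phi'_bound[OF clamp_range])

lemma phi_ext_deriv_bound: "\<bar>phi_ext_deriv x\<bar> \<le> L"
  using phi'_ext_bound[of x] L_nonneg by (simp add: phi_ext_deriv_def)

lemma phi_has_real_derivative: "0 < x \<Longrightarrow> (\<phi> has_real_derivative \<phi>' x) (at x)"
  using phi_deriv[of x] at_within_interior[of x "{0..}"] by auto

lemma phi_ext_has_real_derivative:
  assumes "x \<noteq> 0" "x < T"
  shows "(phi_ext has_real_derivative phi_ext_deriv x) (at x)"
proof (cases "x < 0")
  case True
  have "((\<lambda>_. 0) has_real_derivative phi_ext_deriv x) (at x)"
    using True by (simp add: phi_ext_deriv_def)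
  then show ?thesis
    by (rule has_field_derivative_transform_within_open[where S="{..<0}"])
       (use True in \<open>auto simp: phi_ext_nonpos\<close>)
next
  case False
  then have "0 < x" using assms by auto
  then have "(\<phi> has_real_derivative phi_ext_deriv x) (at x)"
    using assms phi_has_real_derivative by (simp add: phi_ext_deriv_def phi'_ext_eq)
  then show ?thesis
    by (rule has_field_derivative_transform_within_open[where S="{0<..<T}"])
       (use \<open>0 < x\<close> assms in \<open>auto simp: phi_ext_eq\<close>)
qed

abbreviation T_square :: "(real \<times> real) set" where "T_square \<equiv> {0..T} \<times> {0..T}"

definition kernel :: "real \<times> real \<Rightarrow> real" where
  "kernel x = indicator T_square x * N0 \<alpha> (fst x) (snd x)"

definition phi_ext_prod :: "real \<Rightarrow> real \<times> real \<Rightarrow> real" where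
  "phi_ext_prod u x = phi_ext (u - fst x) * phi_ext (u - snd x)"

definition phi_ext_prod_deriv :: "real \<Rightarrow> real \<times> real \<Rightarrow> real" where
  "phi_ext_prod_deriv u x =
     phi_ext_deriv (u - fst x) * phi_ext (u - snd x) + phi_ext (u - fst x) * phi_ext_deriv (u - snd x)"

lemma integrable_kernel: "integrable (lborel \<Otimes>\<^sub>M lborel) kernel"
  unfolding kernel_def[abs_def]
  using alpha_pos alpha_less_1 T_pos by (intro integrable_N0_square) auto

lemma kernel_nonneg: "0 \<le> kernel x"
  unfolding kernel_def using N0_nonneg alpha_pos alpha_less_1 by auto

lemma kernel_swap: "kernel (y, x) = kernel (x, y)"
  unfolding kernel_def by (auto simp: indicator_def mem_Times_iff N0_commute)

lemma borel_measurable_kernel [measurable]: "kernel \<in> borel_measurable (lborel \<Otimes>\<^sub>M lborel)"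
  unfolding kernel_def[abs_def] by measurable

lemma borel_measurable_phi_ext_prod [measurable]:
  "phi_ext_prod u \<in> borel_measurable (lborel \<Otimes>\<^sub>M lborel)"
  unfolding phi_ext_prod_def[abs_def] by measurable

lemma borel_measurable_phi_ext_prod_deriv [measurable]:
  "phi_ext_prod_deriv u \<in> borel_measurable (lborel \<Otimes>\<^sub>M lborel)"
  unfolding phi_ext_prod_deriv_def[abs_def] by measurable

lemma phi_ext_prod_bound: "\<bar>phi_ext_prod u x\<bar> \<le> (L * T) * (L * T)"
  unfolding phi_ext_prod_def abs_mult
  using phi_ext_bound L_nonneg T_pos by (intro mult_mono) auto

lemma phi_ext_prod_Lipschitz: "\<bar>phi_ext_prod u x - phi_ext_prod v x\<bar> \<le> 2 * L * (L * T) * \<bar>u - v\<bar>"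
proof -
  let ?a = "fst x" and ?b = "snd x"
  have "phi_ext_prod u x - phi_ext_prod v x
      = (phi_ext (u - ?a) - phi_ext (v - ?a)) * phi_ext (u - ?b)
        + phi_ext (v - ?a) * (phi_ext (u - ?b) - phi_ext (v - ?b))"
    unfolding phi_ext_prod_def by (simp add: algebra_simps)
  also have "\<bar>\<dots>\<bar> \<le> \<bar>phi_ext (u - ?a) - phi_ext (v - ?a)\<bar> * \<bar>phi_ext (u - ?b)\<bar>
      + \<bar>phi_ext (v - ?a)\<bar> * \<bar>phi_ext (u - ?b) - phi_ext (v - ?b)\<bar>"
    by (simp add: abs_mult[symmetric] abs_triangle_ineq)
  also have "\<dots> \<le> (L * \<bar>u - v\<bar>) * (L * T) + (L * T) * (L * \<bar>u - v\<bar>)"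
    using phi_ext_Lipschitz[of "u - ?a" "v - ?a"] phi_ext_Lipschitz[of "u - ?b" "v - ?b"]
      phi_ext_bound[of "u - ?b"] phi_ext_bound[of "v - ?a"] L_nonneg
    by (intro add_mono mult_mono) auto
  finally show ?thesis by (simp add: algebra_simps)
qed

lemma phi_ext_prod_has_real_derivative:
  assumes "x \<in> T_square" "fst x \<noteq> t" "snd x \<noteq> t" "t < T"
  shows "((\<lambda>u. phi_ext_prod u x) has_real_derivative phi_ext_prod_deriv t x) (at t)"
proof -
  have shifted: "((\<lambda>u. phi_ext (u - c)) has_real_derivative phi_ext_deriv (t - c)) (at t)"
    if "0 \<le> c" "c \<noteq> t" for c
  proof -
    have "((\<lambda>u. phi_ext (u - c)) has_real_derivative phi_ext_deriv (t - c) * 1) (at t)"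
      using that assms(4)
      by (intro DERIV_chain2[where g="\<lambda>u. u - c"] phi_ext_has_real_derivative derivative_eq_intros) auto
    then show ?thesis by simp
  qed
  have "0 \<le> fst x" "0 \<le> snd x"
    using assms(1) by (auto simp: mem_Times_iff)
  from DERIV_mult[OF shifted shifted, OF this(1) assms(2) this(2) assms(3)] show ?thesis
    unfolding phi_ext_prod_def phi_ext_prod_deriv_def by (simp add: algebra_simps)
qed

lemma has_real_derivative_integral_kernel_phi_ext_prod:
  assumes "0 < t" "t < T"
  shows "((\<lambda>u. \<integral>x. kernel x * phi_ext_prod u x \<partial>(lborel \<Otimes>\<^sub>M lborel)) has_real_derivative
          (\<integral>x. kernel x * phi_ext_prod_deriv t x \<partial>(lborel \<Otimes>\<^sub>M lborel))) (at t)"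
proof (rule has_real_derivative_integral_Lipschitz[where w="\<lambda>x. kernel x * (2 * L * (L * T))"])
  show "integrable (lborel \<Otimes>\<^sub>M lborel) (\<lambda>x. kernel x * phi_ext_prod u x)" for u
    using phi_ext_prod_bound by (intro integrable_mult_bounded[OF integrable_kernel]) auto
  show "integrable (lborel \<Otimes>\<^sub>M lborel) (\<lambda>x. kernel x * (2 * L * (L * T)))"
    by (intro integrable_mult_left integrable_kernel)
  show "\<bar>kernel x * phi_ext_prod u x - kernel x * phi_ext_prod t x\<bar> \<le> kernel x * (2 * L * (L * T)) * \<bar>u - t\<bar>"
    for u x
    using mult_left_mono[OF phi_ext_prod_Lipschitz kernel_nonneg]
    by (simp add: right_diff_distrib[symmetric] abs_mult kernel_nonneg mult.assoc)
  show "AE x in lborel \<Otimes>\<^sub>M lborel. ((\<lambda>u. kernel x * phi_ext_prod u x) has_real_derivative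
          kernel x * phi_ext_prod_deriv t x) (at t)"
    using AE_lborel_pair_neq[of t t]
  proof eventually_elim
    case (elim x)
    show ?case
    proof (cases "x \<in> T_square")
      case True
      then show ?thesis
        using elim assms by (intro DERIV_cmult phi_ext_prod_has_real_derivative) auto
    qed (simp add: kernel_def)
  qed
qed measurable

lemma set_integral_Icc_phi_eq_phi_ext:
  assumes "0 \<le> u" "u \<le> T"
  shows "(LINT r:{0..u}|lborel. f r * \<phi> r) = (LINT b:{0..T}|lborel. f (u - b) * phi_ext (u - b))"
proof -
  have "(LINT r:{0..u}|lborel. f r * \<phi> r) = (LINT b:{0..u}|lborel. f (u - b) * \<phi> (u - b))"
    by (rule set_integral_Icc_reflect)
  also have "\<dots> = (LINT b:{0..T}|lborel. f (u - b) * phi_ext (u - b))"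
    unfolding set_lebesgue_integral_def using assms
    by (intro Bochner_Integration.integral_cong refl)
       (auto simp: indicator_def phi_ext_eq phi_ext_nonpos)
  finally show ?thesis .
qed

lemma energy_eq_integral_kernel:
  assumes "0 < u" "u \<le> T"
  shows "(LINT s:{0..u}|lborel. LINT r:{0..u}|lborel. 1/2 * N0 \<alpha> (u - r) (u - s) * \<phi> s * \<phi> r)
       = 1/2 * (\<integral>x. kernel x * phi_ext_prod u x \<partial>(lborel \<Otimes>\<^sub>M lborel))"
proof -
  let ?I = "\<lambda>a. LINT b:{0..T}|lborel. N0 \<alpha> a b * phi_ext (u - b)"
  have inner: "(LINT r:{0..u}|lborel. 1/2 * N0 \<alpha> (u - r) (u - s) * \<phi> s * \<phi> r)
      = (1/2 * ?I (u - s)) * \<phi> s" for s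
    using set_integral_Icc_phi_eq_phi_ext[of u "\<lambda>r. 1/2 * \<phi> s * N0 \<alpha> (u - r) (u - s)"] assms
    by (simp add: N0_commute mult_ac)
  have "(LINT s:{0..u}|lborel. LINT r:{0..u}|lborel. 1/2 * N0 \<alpha> (u - r) (u - s) * \<phi> s * \<phi> r)
      = (LINT a:{0..T}|lborel. (1/2 * ?I a) * phi_ext (u - a))"
    unfolding inner using set_integral_Icc_phi_eq_phi_ext[of u "\<lambda>s. 1/2 * ?I (u - s)"] assms
    by simp
  also have "\<dots> = 1/2 * (LINT a:{0..T}|lborel. LINT b:{0..T}|lborel. N0 \<alpha> a b * phi_ext_prod u (a, b))"
    by (simp add: phi_ext_prod_def mult_ac flip: set_integral_mult_right)
  also have "(LINT a:{0..T}|lborel. LINT b:{0..T}|lborel. N0 \<alpha> a b * phi_ext_prod u (a, b))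
      = (\<integral>x. kernel x * phi_ext_prod u x \<partial>(lborel \<Otimes>\<^sub>M lborel))"
  proof -
    have "integrable (lborel \<Otimes>\<^sub>M lborel) (\<lambda>x. kernel x * phi_ext_prod u x)"
      using phi_ext_prod_bound by (intro integrable_mult_bounded[OF integrable_kernel]) auto
    from set_integral_lborel_pair[of "{0..T}" "{0..T}" "\<lambda>x. N0 \<alpha> (fst x) (snd x) * phi_ext_prod u x"]
      this show ?thesis
      by (simp add: kernel_def mult.assoc)
  qed
  finally show ?thesis .
qed

lemma integral_kernel_phi_ext_prod_deriv:
  "(\<integral>x. kernel x * phi_ext_prod_deriv t x \<partial>(lborel \<Otimes>\<^sub>M lborel))
     = 2 * (\<integral>x. kernel x * (phi_ext_deriv (t - fst x) * phi_ext (t - snd x)) \<partial>(lborel \<Otimes>\<^sub>M lborel))"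
proof -
  let ?A = "\<lambda>x. kernel x * (phi_ext_deriv (t - fst x) * phi_ext (t - snd x))"
  let ?B = "\<lambda>x. kernel x * (phi_ext (t - fst x) * phi_ext_deriv (t - snd x))"
  have bound: "\<bar>phi_ext_deriv a * phi_ext b\<bar> \<le> L * (L * T)" for a b
    unfolding abs_mult using phi_ext_deriv_bound phi_ext_bound L_nonneg by (intro mult_mono) auto
  have int: "integrable (lborel \<Otimes>\<^sub>M lborel) ?A" "integrable (lborel \<Otimes>\<^sub>M lborel) ?B"
    using bound by (auto simp: mult.commute[of "phi_ext _"] intro!: integrable_mult_bounded[OF integrable_kernel])
  have "(\<integral>x. ?B x \<partial>(lborel \<Otimes>\<^sub>M lborel)) = (\<integral>(x, y). ?A (y, x) \<partial>(lborel \<Otimes>\<^sub>M lborel))"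
    by (intro Bochner_Integration.integral_cong refl) (auto simp: kernel_swap mult_ac)
  also have "\<dots> = (\<integral>x. ?A x \<partial>(lborel \<Otimes>\<^sub>M lborel))"
    by (rule lborel_pair.integral_product_swap) measurable
  finally show ?thesis
    unfolding phi_ext_prod_deriv_def distrib_left Bochner_Integration.integral_add[OF int] by simp
qed

lemma set_integral_N0_phi_ext:
  assumes "0 < a" "0 \<le> t" "t \<le> T"
  shows "(LINT b:{0..T}|lborel. N0 \<alpha> a b * phi_ext (t - b))
       = N1 \<alpha> a 0 * \<phi> t - (LINT b:{0..t}|lborel. N1 \<alpha> a b * phi'_ext (t - b))"
proof -
  have "(LINT b:{0..T}|lborel. N0 \<alpha> a b * phi_ext (t - b)) = (LINT b:{0..t}|lborel. N0 \<alpha> a b * phi_ext (t - b))"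
    unfolding set_lebesgue_integral_def using assms
    by (intro Bochner_Integration.integral_cong refl) (auto simp: indicator_def phi_ext_nonpos)
  also have "\<dots> = N1 \<alpha> a 0 * phi_ext t - (LINT b:{0..t}|lborel. N1 \<alpha> a b * phi'_ext (t - b))"
  proof (rule set_integral_N0_by_parts)
    show "(phi_ext has_real_derivative phi'_ext x) (at x)" if "0 < x" "x < t" for x
      using phi_ext_has_real_derivative[of x] that assms by (simp add: phi_ext_deriv_def)
  qed (use assms continuous_phi_ext continuous_phi'_ext phi_ext_nonpos in \<open>auto intro: continuous_on_subset\<close>)
  finally show ?thesis
    using assms by (simp add: phi_ext_eq)
qed

lemma integral_kernel_phi_ext_deriv:
  assumes "0 < t" "t \<le> T"
  shows "(\<integral>x. kernel x * (phi_ext_deriv (t - fst x) * phi_ext (t - snd x)) \<partial>(lborel \<Otimes>\<^sub>M lborel))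
       = (LINT a:{0..t}|lborel. phi'_ext (t - a) *
            (N1 \<alpha> a 0 * \<phi> t - (LINT b:{0..t}|lborel. N1 \<alpha> a b * phi'_ext (t - b))))"
proof -
  let ?F = "\<lambda>a. LINT b:{0..T}|lborel. N0 \<alpha> a b * (phi_ext_deriv (t - a) * phi_ext (t - b))"
  let ?G = "\<lambda>a. phi'_ext (t - a) *
              (N1 \<alpha> a 0 * \<phi> t - (LINT b:{0..t}|lborel. N1 \<alpha> a b * phi'_ext (t - b)))"
  have "integrable (lborel \<Otimes>\<^sub>M lborel) (\<lambda>x. kernel x * (phi_ext_deriv (t - fst x) * phi_ext (t - snd x)))"
    using phi_ext_deriv_bound phi_ext_bound L_nonneg
    by (intro integrable_mult_bounded[OF integrable_kernel, where C="L * (L * T)"])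
       (auto simp: abs_mult intro!: mult_mono)
  then have "(\<integral>x. kernel x * (phi_ext_deriv (t - fst x) * phi_ext (t - snd x)) \<partial>(lborel \<Otimes>\<^sub>M lborel))
      = (LINT a:{0..T}|lborel. ?F a)"
    using set_integral_lborel_pair[of "{0..T}" "{0..T}"
        "\<lambda>x. N0 \<alpha> (fst x) (snd x) * (phi_ext_deriv (t - fst x) * phi_ext (t - snd x))"]
    by (simp add: kernel_def mult.assoc)
  also have "\<dots> = (LINT a:{0..t}|lborel. ?G a)"
    unfolding set_lebesgue_integral_def[of lborel "{0..T}" ?F]
      set_lebesgue_integral_def[of lborel "{0..t}" ?G]
  proof (rule integral_discrete_difference[where X="{0, t}"])
    fix a :: real assume a: "a \<notin> {0, t}"
    show "indicator {0..T} a *\<^sub>R ?F a = indicator {0..t} a *\<^sub>R ?G a"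
    proof (cases "0 < a \<and> a < t")
      case True
      have "N0 \<alpha> a b * (phi_ext_deriv (t - a) * phi_ext (t - b))
          = phi'_ext (t - a) * (N0 \<alpha> a b * phi_ext (t - b))" for b
        using True by (simp add: phi_ext_deriv_def)
      then have "?F a = phi'_ext (t - a) * (LINT b:{0..T}|lborel. N0 \<alpha> a b * phi_ext (t - b))"
        by (simp only: set_integral_mult_right)
      then show ?thesis
        using True assms by (simp add: set_integral_N0_phi_ext)
    next
      case False
      then have "a < 0 \<or> t < a"
        using a by auto
      then show ?thesis
        by (auto simp: phi_ext_deriv_def)
    qed
  qed (auto simp: emeasure_lborel_singleton)
  finally show ?thesis .
qed

lemma set_integrable_phi'_ext_N1:
  assumes "0 \<le> t"
  shows "set_integrable lborel {0..t} (\<lambda>a. phi'_ext (t - a) * N1 \<alpha> a 0)"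
proof -
  have "integrable lborel (\<lambda>a. (indicator {0..t} a * a powr (-\<alpha>)) * (phi'_ext (t - a) / Gamma (1 - \<alpha>)))"
    using assms alpha_less_1 phi'_ext_bound
    by (intro integrable_mult_bounded[OF integrable_indicator_Icc_powr_neg, where C="L / Gamma (1 - \<alpha>)"])
       (auto simp: divide_right_mono)
  then show ?thesis
    unfolding set_integrable_def by (simp add: N1_eq_powr mult_ac)
qed

lemma set_integrable_phi'_ext_N1_convolution:
  assumes "0 \<le> t"
  shows "set_integrable lborel {0..t}
           (\<lambda>a. phi'_ext (t - a) * (LINT b:{0..t}|lborel. N1 \<alpha> a b * phi'_ext (t - b)))"
proof -
  have "integrable (lborel \<Otimes>\<^sub>M lborel) (\<lambda>x. indicator ({0..t} \<times> {0..t}) x * N1 \<alpha> (fst x) (snd x)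
          * (phi'_ext (t - fst x) * phi'_ext (t - snd x)))"
    using assms alpha_pos alpha_less_1 phi'_ext_bound L_nonneg
    by (intro integrable_mult_bounded[OF integrable_N1_square, where C="L * L"])
       (auto simp: abs_mult intro!: mult_mono)
  from lborel_pair.integrable_fst'[OF this] show ?thesis
    unfolding set_integrable_def set_lebesgue_integral_def
    by (simp add: indicator_times mult_ac flip: integral_mult_right_zero)
qed

lemma caputo_eq_set_integral_phi'_ext:
  assumes "0 < t" "t \<le> T"
  shows "caputo \<alpha> \<phi> t = (LINT a:{0..t}|lborel. phi'_ext (t - a) * N1 \<alpha> a 0)"
proof -
  have "caputo \<alpha> \<phi> t = 1 / Gamma (1 - \<alpha>) * (LINT a:{0..t}|lborel. a powr (-\<alpha>) * deriv \<phi> (t - a))"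
    unfolding caputo_def by (subst set_integral_Icc_reflect) simp
  also have "\<dots> = (LINT a:{0..t}|lborel. phi'_ext (t - a) * N1 \<alpha> a 0)"
    unfolding set_lebesgue_integral_def
  proof (subst integral_mult_right_zero[symmetric], rule integral_discrete_difference[where X="{t}"])
    fix a :: real assume "a \<notin> {t}"
    show "1 / Gamma (1 - \<alpha>) * (indicator {0..t} a *\<^sub>R (a powr (-\<alpha>) * deriv \<phi> (t - a)))
        = indicator {0..t} a *\<^sub>R (phi'_ext (t - a) * N1 \<alpha> a 0)"
    proof (cases "a \<in> {0..t}")
      case True
      then have "0 < t - a" "t - a \<in> {0..T}"
        using \<open>a \<notin> {t}\<close> assms by auto
      then have "deriv \<phi> (t - a) = phi'_ext (t - a)"
        by (simp add: DERIV_imp_deriv phi_has_real_derivative phi'_ext_eq)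
      then show ?thesis
        using True by (simp add: N1_eq_powr)
    qed simp
  qed (auto simp: emeasure_lborel_singleton)
  finally show ?thesis .
qed

lemma N1_double_integral_eq:
  assumes "0 < t" "t \<le> T"
  shows "(LINT s:{0..t}|lborel. LINT r:{0..t}|lborel. N1 \<alpha> (t - r) (t - s) * \<phi>' s * \<phi>' r)
       = (LINT a:{0..t}|lborel. phi'_ext (t - a) * (LINT b:{0..t}|lborel. N1 \<alpha> a b * phi'_ext (t - b)))"
proof -
  have phi': "\<phi>' (t - a) = phi'_ext (t - a)" if "a \<in> {0..t}" for a
    using that assms by (simp add: phi'_ext_eq)
  have "(LINT s:{0..t}|lborel. LINT r:{0..t}|lborel. N1 \<alpha> (t - r) (t - s) * \<phi>' s * \<phi>' r)
      = (LINT a:{0..t}|lborel. LINT b:{0..t}|lborel. N1 \<alpha> b a * \<phi>' (t - a) * \<phi>' (t - b))"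
    by (subst set_integral_Icc_reflect, subst (2) set_integral_Icc_reflect) simp
  also have "\<dots> = (LINT a:{0..t}|lborel. phi'_ext (t - a) * (LINT b:{0..t}|lborel. N1 \<alpha> a b * phi'_ext (t - b)))"
  proof (intro set_lebesgue_integral_cong allI impI)
    fix a assume "a \<in> {0..t}"
    then have "(LINT b:{0..t}|lborel. N1 \<alpha> b a * \<phi>' (t - a) * \<phi>' (t - b))
        = (LINT b:{0..t}|lborel. phi'_ext (t - a) * (N1 \<alpha> a b * phi'_ext (t - b)))"
      by (intro set_lebesgue_integral_cong allI impI) (auto simp: phi' N1_commute)
    then show "(LINT b:{0..t}|lborel. N1 \<alpha> b a * \<phi>' (t - a) * \<phi>' (t - b))
        = phi'_ext (t - a) * (LINT b:{0..t}|lborel. N1 \<alpha> a b * phi'_ext (t - b))"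
      by simp
  qed simp
  finally show ?thesis .
qed

lemma energy_has_real_derivative:
  assumes "0 < t" "t < T"
  shows "((\<lambda>u. LINT s:{0..u}|lborel. LINT r:{0..u}|lborel. 1/2 * N0 \<alpha> (u - r) (u - s) * \<phi> s * \<phi> r)
          has_real_derivative
          (\<phi> t * caputo \<alpha> \<phi> t
           - (LINT s:{0..t}|lborel. LINT r:{0..t}|lborel. N1 \<alpha> (t - r) (t - s) * \<phi>' s * \<phi>' r))) (at t)"
proof -
  let ?I = "\<lambda>a. LINT b:{0..t}|lborel. N1 \<alpha> a b * phi'_ext (t - b)"
  have split: "phi'_ext (t - a) * (N1 \<alpha> a 0 * \<phi> t - ?I a)
      = \<phi> t * (phi'_ext (t - a) * N1 \<alpha> a 0) - phi'_ext (t - a) * ?I a" for a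
    by (simp add: algebra_simps)
  have "1/2 * (\<integral>x. kernel x * phi_ext_prod_deriv t x \<partial>(lborel \<Otimes>\<^sub>M lborel))
      = (\<integral>x. kernel x * (phi_ext_deriv (t - fst x) * phi_ext (t - snd x)) \<partial>(lborel \<Otimes>\<^sub>M lborel))"
    by (simp only: integral_kernel_phi_ext_prod_deriv)
  also have "\<dots> = (LINT a:{0..t}|lborel. \<phi> t * (phi'_ext (t - a) * N1 \<alpha> a 0) - phi'_ext (t - a) * ?I a)"
    using assms by (simp only: integral_kernel_phi_ext_deriv split less_imp_le)
  also have "\<dots> = \<phi> t * (LINT a:{0..t}|lborel. phi'_ext (t - a) * N1 \<alpha> a 0)
        - (LINT a:{0..t}|lborel. phi'_ext (t - a) * ?I a)"
    using set_integral_diff(2)[OF set_integrable_mult_right set_integrable_phi'_ext_N1_convolution]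
      set_integrable_phi'_ext_N1 assms
    by simp
  also have "\<dots> = \<phi> t * caputo \<alpha> \<phi> t
        - (LINT s:{0..t}|lborel. LINT r:{0..t}|lborel. N1 \<alpha> (t - r) (t - s) * \<phi>' s * \<phi>' r)"
    using assms by (simp only: caputo_eq_set_integral_phi'_ext N1_double_integral_eq less_imp_le)
  finally have derivative_eq: "1/2 * (\<integral>x. kernel x * phi_ext_prod_deriv t x \<partial>(lborel \<Otimes>\<^sub>M lborel))
      = \<phi> t * caputo \<alpha> \<phi> t
        - (LINT s:{0..t}|lborel. LINT r:{0..t}|lborel. N1 \<alpha> (t - r) (t - s) * \<phi>' s * \<phi>' r)" .
  have "((\<lambda>u. 1/2 * (\<integral>x. kernel x * phi_ext_prod u x \<partial>(lborel \<Otimes>\<^sub>M lborel))) has_real_derivative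
      1/2 * (\<integral>x. kernel x * phi_ext_prod_deriv t x \<partial>(lborel \<Otimes>\<^sub>M lborel))) (at t)"
    by (intro DERIV_cmult has_real_derivative_integral_kernel_phi_ext_prod assms)
  then show ?thesis
    unfolding derivative_eq
  proof (rule has_field_derivative_transform_within_open[where S="{0<..<T}"])
    show "1/2 * (\<integral>x. kernel x * phi_ext_prod u x \<partial>(lborel \<Otimes>\<^sub>M lborel))
        = (LINT s:{0..u}|lborel. LINT r:{0..u}|lborel. 1/2 * N0 \<alpha> (u - r) (u - s) * \<phi> s * \<phi> r)"
      if "u \<in> {0<..<T}" for u
      using that by (intro energy_eq_integral_kernel[symmetric]) auto
  qed (use assms in auto)
qed

end

theorem proposition4p2:
  fixes \<alpha> :: real and \<phi> \<phi>' :: "real \<Rightarrow> real" and t :: real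
  assumes "0 < \<alpha>" "\<alpha> < 1"
    and "\<And>x. 0 \<le> x \<Longrightarrow> (\<phi> has_real_derivative \<phi>' x) (at x within {0..})"
    and "continuous_on {0..} \<phi>'"
    and "\<phi> 0 = 0"
    and "0 < t"
  shows "((\<lambda>u. LINT s:{0..u}|lborel. LINT r:{0..u}|lborel.
              1/2 * N0 \<alpha> (u - r) (u - s) * \<phi> s * \<phi> r)
          has_real_derivative
          (\<phi> t * caputo \<alpha> \<phi> t
           - (LINT s:{0..t}|lborel. LINT r:{0..t}|lborel.
                N1 \<alpha> (t - r) (t - s) * \<phi>' s * \<phi>' r))) (at t)"
proof -
  have "compact (\<phi>' ` {0..t + 1})"
    by (intro compact_continuous_image continuous_on_subset[OF assms(4)]) auto
  then obtain L where "\<forall>x\<in>{0..t + 1}. \<bar>\<phi>' x\<bar> \<le> L"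
    by (auto dest!: compact_imp_bounded simp: bounded_iff)
  then interpret caputo_energy \<alpha> "t + 1" L \<phi> \<phi>'
    using assms by unfold_locales auto
  show ?thesis
    using assms by (intro energy_has_real_derivative) auto
qed

end
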